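(* Let $n=2$, $d\ge3$, and let $P_1,P_2$ be real quadratic forms on $\mathbb{R}^d$ such that for all linearly independent $\vec w_1,\dots,\vec w_{d-2}\in\mathbb{R}^d$, $\det[\nabla P_1(t);\nabla P_2(t);\vec w_1;\dots;\vec w_{d-2}]\not\equiv0$ as a polynomial in $t$. Let $V\subset\mathbb{R}^{d+2}$ be a nontrivial proper linear subspace. (1) If $1\le\dim V\le d-1$, then $\{t:\dim(\pi_t(V))<\dim V\}$ is contained in the zero set of a nonzero polynomial of degree at most $2$. (2) If $d\le\dim V\le d+1$, then $\{t:\dim(\pi_t(V))<\dim V-1\}$ is contained in the zero set of a nonzero polynomial of degree at most $2$.
   Context: For $t\in\mathbb{R}^d$, $V(t)\subset\mathbb{R}^{d+2}$ is the linear subspace spanned by $(e_j,\partial_jP_1(t),\partial_jP_2(t))$, $j=1,\dots,d$, and $\pi_t$ is the orthogonal projection onto $V(t)$. *)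

theory Defs
  imports "HOL-Analysis.Analysis"
begin

definition quadratic_form :: "(real^'d \<Rightarrow> real) \<Rightarrow> bool" where
  "quadratic_form P \<longleftrightarrow> (\<exists>A::real^'d^'d. \<forall>t. P t = t \<bullet> (A *v t))"

definition partial :: "(real^'d \<Rightarrow> real) \<Rightarrow> 'd \<Rightarrow> real^'d \<Rightarrow> real" where
  "partial P j t = deriv (\<lambda>s. P (t + s *\<^sub>R axis j 1)) 0"

definition grad :: "(real^'d \<Rightarrow> real) \<Rightarrow> real^'d \<Rightarrow> real^'d" where
  "grad P t = (\<chi> j. partial P j t)"

text \<open>R^(d+2) rendered as (real^'d) \<times> real \<times> real. Generators of V(t):
  (e_j, d_j P1(t), d_j P2(t)).\<close>
definition Vt :: "(real^'d \<Rightarrow> real) \<Rightarrow> (real^'d \<Rightarrow> real) \<Rightarrow> real^'d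
                   \<Rightarrow> ((real^'d) \<times> real \<times> real) set" where
  "Vt P1 P2 t = span (range (\<lambda>j. (axis j 1, partial P1 j t, partial P2 j t)))"

definition orth_proj :: "'a::euclidean_space set \<Rightarrow> 'a \<Rightarrow> 'a" where
  "orth_proj W x = (THE y. y \<in> W \<and> (\<forall>w\<in>W. (x - y) \<bullet> w = 0))"

definition pi_t :: "(real^'d \<Rightarrow> real) \<Rightarrow> (real^'d \<Rightarrow> real) \<Rightarrow> real^'d
                   \<Rightarrow> (real^'d) \<times> real \<times> real \<Rightarrow> (real^'d) \<times> real \<times> real" where
  "pi_t P1 P2 t = orth_proj (Vt P1 P2 t)"

text \<open>Polynomials of degree at most 2 on R^d: c + b.t + t^T Q t.
  Such a polynomial is the zero polynomial iff c = 0, b = 0 and Q + Q^T = 0.\<close>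
definition deg2_poly :: "real \<Rightarrow> real^'d \<Rightarrow> real^'d^'d \<Rightarrow> real^'d \<Rightarrow> real" where
  "deg2_poly c b Q t = c + b \<bullet> t + t \<bullet> (Q *v t)"

definition deg2_poly_nonzero :: "real \<Rightarrow> real^'d \<Rightarrow> real^'d^'d \<Rightarrow> bool" where
  "deg2_poly_nonzero c b Q \<longleftrightarrow> c \<noteq> 0 \<or> b \<noteq> 0 \<or> Q + transpose Q \<noteq> 0"

definition idx :: "'d::finite \<Rightarrow> nat" where
  "idx = (SOME f. bij_betw f (UNIV::'d set) {..<CARD('d)})"

definition row_matrix :: "(real^'d \<Rightarrow> real) \<Rightarrow> (real^'d \<Rightarrow> real) \<Rightarrow> (nat \<Rightarrow> real^'d)
                          \<Rightarrow> real^'d \<Rightarrow> real^'d^'d" where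
  "row_matrix P1 P2 w t = (\<chi> i. if idx i = 0 then grad P1 t
                                 else if idx i = 1 then grad P2 t
                                 else w (idx i - 2))"

end

theory Submission
  imports Defs
begin

text \<open>
  Write \<open>u = (x, \<alpha>, \<beta>)\<close> for vectors of \<open>\<real>\<^sup>d \<times> \<real> \<times> \<real>\<close>. The kernel of \<open>\<pi>\<^sub>t\<close> consists of the
  vectors \<open>k = (-(a \<nabla>P\<^sub>1(t) + b \<nabla>P\<^sub>2(t)), a, b)\<close>, and for such \<open>k\<close> one has
  \<open>k \<bullet> u = (a, b) \<bullet> \<delta>\<^sub>t(u)\<close> with the defect \<open>\<delta>\<^sub>t(u) = (\<alpha> - \<nabla>P\<^sub>1(t) \<bullet> x, \<beta> - \<nabla>P\<^sub>2(t) \<bullet> x)\<close>, which is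
  affine in \<open>t\<close> because the gradients of quadratic forms are linear.

  If \<open>\<pi>\<^sub>t\<close> loses rank on \<open>V\<close>, some \<open>k \<noteq> 0\<close> as above lies in \<open>V\<close>; then \<open>(a, b) \<noteq> 0\<close> is orthogonal to
  \<open>\<delta>\<^sub>t(u)\<close> and \<open>\<delta>\<^sub>t(u')\<close> for all \<open>u, u' \<in> V\<^sup>\<bottom>\<close>, so the \<open>2 \<times> 2\<close> determinant of these two defects, a
  polynomial of degree at most two in \<open>t\<close>, vanishes. If the rank drops by two, the kernel meets \<open>V\<close>
  in a plane, which forces \<open>\<delta>\<^sub>t(u) = 0\<close>.

  It remains to see that these polynomials are not identically zero. If they were, then for every
  \<open>t\<close> the gradients \<open>\<nabla>P\<^sub>1(t), \<nabla>P\<^sub>2(t)\<close> would have a common null vector in the span of the first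
  components of \<open>u, u'\<close>; completing these by \<open>d - 2\<close> independent vectors of their orthogonal
  complement gives matrices as in the nondegeneracy hypothesis with determinant identically zero.
  In (1) the complement \<open>V\<^sup>\<bottom>\<close> has dimension at least three, so it either contains \<open>u, u'\<close> with
  independent first components, or both \<open>(0, 1, 0)\<close> and \<open>(0, 0, 1)\<close>, whose defect determinant is \<open>1\<close>.
\<close>

section \<open>Linear algebra\<close>

lemma orth_proj_span_ex1:
  fixes S :: "'a::euclidean_space set"
  shows "\<exists>!y. y \<in> span S \<and> (\<forall>w\<in>span S. (x - y) \<bullet> w = 0)"
proof (rule ex_ex1I)
  obtain y z where "y \<in> span S" "\<And>w. w \<in> span S \<Longrightarrow> orthogonal z w" "x = y + z"
    using orthogonal_subspace_decomp_exists[of S x] by blast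
  then show "\<exists>y. y \<in> span S \<and> (\<forall>w\<in>span S. (x - y) \<bullet> w = 0)"
    by (auto simp: orthogonal_def)
next
  fix y1 y2
  assume y1: "y1 \<in> span S \<and> (\<forall>w\<in>span S. (x - y1) \<bullet> w = 0)"
    and y2: "y2 \<in> span S \<and> (\<forall>w\<in>span S. (x - y2) \<bullet> w = 0)"
  then have "y1 - y2 \<in> span S" by (simp add: span_diff)
  with y1 y2 have "(x - y2) \<bullet> (y1 - y2) - (x - y1) \<bullet> (y1 - y2) = 0"
    by simp
  then have "(y1 - y2) \<bullet> (y1 - y2) = 0"
    by (simp add: inner_diff_left)
  then show "y1 = y2" by simp
qed

lemma orth_proj_span_eq_iff:
  fixes S :: "'a::euclidean_space set"
  shows "orth_proj (span S) x = y \<longleftrightarrow> y \<in> span S \<and> (\<forall>w\<in>span S. (x - y) \<bullet> w = 0)"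
  using theI'[OF orth_proj_span_ex1] orth_proj_span_ex1 unfolding orth_proj_def by blast

lemma linear_orth_proj_span:
  fixes S :: "'a::euclidean_space set"
  shows "linear (orth_proj (span S))"
proof (rule linearI)
  fix x y
  have "orth_proj (span S) x \<in> span S" "\<forall>w\<in>span S. (x - orth_proj (span S) x) \<bullet> w = 0"
       "orth_proj (span S) y \<in> span S" "\<forall>w\<in>span S. (y - orth_proj (span S) y) \<bullet> w = 0"
    using orth_proj_span_eq_iff by blast+
  then show "orth_proj (span S) (x + y) = orth_proj (span S) x + orth_proj (span S) y"
    unfolding orth_proj_span_eq_iff by (auto simp: span_add algebra_simps inner_diff_left inner_add_left)
next
  fix c x
  have "orth_proj (span S) x \<in> span S" "\<forall>w\<in>span S. (x - orth_proj (span S) x) \<bullet> w = 0"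
    using orth_proj_span_eq_iff by blast+
  then show "orth_proj (span S) (c *\<^sub>R x) = c *\<^sub>R orth_proj (span S) x"
    unfolding orth_proj_span_eq_iff
    by (auto simp: span_scale inner_diff_left simp flip: scaleR_right_diff_distrib)
qed

lemma orth_proj_span_eq_0_iff:
  fixes S :: "'a::euclidean_space set"
  shows "orth_proj (span S) x = 0 \<longleftrightarrow> (\<forall>w\<in>S. x \<bullet> w = 0)"
  unfolding orth_proj_span_eq_iff
  by (metis diff_zero orthogonal_def orthogonal_to_span span_base span_zero)

lemma dim_le_dim_image_add_dim_kernel:
  fixes f :: "'a::euclidean_space \<Rightarrow> 'b::euclidean_space"
  assumes f: "linear f" and V: "subspace V"
  shows "dim V \<le> dim (f ` V) + dim {v\<in>V. f v = 0}"
proof -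
  define K where "K = {v\<in>V. f v = 0}"
  define C where "C = {y\<in>V. \<forall>x\<in>K. orthogonal x y}"
  have "subspace K"
    using V f by (auto simp: K_def subspace_def linear_add linear_cmul linear_0)
  then have dim_V: "dim C + dim K = dim V"
    unfolding C_def by (rule dim_subspace_orthogonal_to_vectors[OF _ V]) (auto simp: K_def)
  have "inj_on f C"
  proof (rule inj_onI)
    fix a b assume ab: "a \<in> C" "b \<in> C" "f a = f b"
    then have "a - b \<in> K" "a \<in> C" "b \<in> C"
      using f V by (auto simp: K_def C_def linear_diff subspace_diff)
    then have "orthogonal (a - b) a" "orthogonal (a - b) b" by (auto simp: C_def)
    then have "(a - b) \<bullet> (a - b) = 0" by (simp add: orthogonal_def inner_diff_right)
    then show "a = b" by simp
  qed
  moreover have "subspace C"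
    by (auto simp: C_def subspace_def orthogonal_clauses V[unfolded subspace_def])
  ultimately have "dim (f ` C) = dim C"
    using f by (metis dim_image_eq span_eq_iff)
  moreover have "dim (f ` C) \<le> dim (f ` V)" by (rule dim_subset) (auto simp: C_def)
  ultimately show ?thesis using dim_V unfolding K_def by linarith
qed

lemma inj_on_linear_image_eq_UNIV:
  fixes f :: "'a::euclidean_space \<Rightarrow> 'b::euclidean_space"
  assumes f: "linear f" and K: "subspace K" and inj: "inj_on f K" and dim: "DIM('b) \<le> dim K"
  shows "f ` K = UNIV"
proof -
  have "dim (f ` K) = dim K"
    using f inj K by (intro dim_image_eq) (auto simp: span_eq_iff[THEN iffD2, OF K])
  then have "span (f ` K) = UNIV"
    using dim dim_subset_UNIV[of "f ` K"] by (simp add: dim_eq_full)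
  then show ?thesis
    using K f by (metis linear_subspace_image span_eq_iff)
qed

lemma det2_eq_0_iff:
  fixes r1 r2 s1 s2 :: real
  shows "r1 * s2 - r2 * s1 = 0 \<longleftrightarrow>
         (\<exists>a b. (a, b) \<noteq> (0, 0) \<and> a * r1 + b * r2 = 0 \<and> a * s1 + b * s2 = 0)"
proof
  assume det: "r1 * s2 - r2 * s1 = 0"
  consider "(r1, r2) \<noteq> (0, 0)" | "(s1, s2) \<noteq> (0, 0)" | "r1 = 0 \<and> r2 = 0 \<and> s1 = 0 \<and> s2 = 0"
    by auto
  then show "\<exists>a b. (a, b) \<noteq> (0, 0) \<and> a * r1 + b * r2 = 0 \<and> a * s1 + b * s2 = 0"
  proof cases
    case 1
    with det show ?thesis by (intro exI[of _ r2] exI[of _ "- r1"]) (auto simp: algebra_simps)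
  next
    case 2
    with det show ?thesis by (intro exI[of _ s2] exI[of _ "- s1"]) (auto simp: algebra_simps)
  next
    case 3
    then show ?thesis by (intro exI[of _ 1] exI[of _ 0]) simp
  qed
next
  assume "\<exists>a b. (a, b) \<noteq> (0, 0) \<and> a * r1 + b * r2 = 0 \<and> a * s1 + b * s2 = 0"
  then obtain a b where ab: "(a, b) \<noteq> (0, 0)" "a * r1 + b * r2 = 0" "a * s1 + b * s2 = 0"
    by blast
  have "a * (r1 * s2 - r2 * s1) = s2 * (a * r1 + b * r2) - r2 * (a * s1 + b * s2)"
       "b * (r1 * s2 - r2 * s1) = r1 * (a * s1 + b * s2) - s1 * (a * r1 + b * r2)"
    by algebra+
  with ab(2,3) have "a * (r1 * s2 - r2 * s1) = 0" "b * (r1 * s2 - r2 * s1) = 0"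
    by simp_all
  with ab(1) show "r1 * s2 - r2 * s1 = 0" by force
qed

lemma det_eq_0_if_orthogonal_to_rows:
  fixes A :: "real^'n::finite^'n"
  assumes "z \<noteq> 0" and "\<And>i. A $ i \<bullet> z = 0"
  shows "det A = 0"
proof -
  have "A *v z = 0"
    using assms(2) by (simp add: vec_eq_iff matrix_vector_mult_def inner_vec_def mult.commute)
  with assms(1) have "\<not> (\<exists>B. B ** A = mat 1)"
    using matrix_left_invertible_ker by blast
  then show ?thesis
    using invertible_det_nz invertible_left_inverse by blast
qed

lemma exists_independent_family_orthogonal:
  fixes S :: "'a::euclidean_space set"
  assumes "n + dim S \<le> DIM('a)"
  shows "\<exists>w::nat \<Rightarrow> 'a. inj_on w {..<n} \<and> independent (w ` {..<n}) \<and> (\<forall>i. \<forall>s\<in>S. w i \<bullet> s = 0)"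
proof -
  define W where "W = {y \<in> UNIV. \<forall>v\<in>span S. orthogonal v y}"
  have "dim W + dim (span S) = dim (UNIV :: 'a set)"
    unfolding W_def by (rule dim_subspace_orthogonal_to_vectors) auto
  then have "dim W + dim S = DIM('a)" by simp
  then have "n \<le> dim W" using assms by linarith
  obtain B where B: "B \<subseteq> W" "independent B" "W \<subseteq> span B" "card B = dim W"
    by (rule basis_exists)
  obtain f where f: "bij_betw f {..<card B} B"
    using ex_bij_betw_nat_finite[of B] B(2) by (auto simp: atLeast0LessThan finiteI_independent)
  define w where "w i = (if i < card B then f i else 0)" for i
  have sub: "{..<n} \<subseteq> {..<card B}" using \<open>n \<le> dim W\<close> B(4) by auto
  have "w ` {..<n} \<subseteq> B"
    using bij_betw_imp_surj_on[OF f] sub unfolding w_def by auto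
  then have "independent (w ` {..<n})"
    using B(2) independent_mono by blast
  moreover have "inj_on w {..<n}"
    using bij_betw_imp_inj_on[OF f] sub unfolding w_def inj_on_def by auto
  moreover have "w i \<bullet> s = 0" if "s \<in> S" for i s
  proof (cases "i < card B")
    case True
    then have "w i \<in> W" using bij_betw_imp_surj_on[OF f] B(1) by (auto simp: w_def)
    with that show ?thesis by (auto simp: W_def orthogonal_def inner_commute span_base)
  qed (simp add: w_def)
  ultimately show ?thesis by blast
qed

lemma independent_pair_scaleR_eq_0:
  fixes x y :: "'a::real_vector"
  assumes "independent {x, y}" and "x \<noteq> y" and "a *\<^sub>R x + b *\<^sub>R y = 0"
  shows "a = 0 \<and> b = 0"
proof -
  have "(\<Sum>v\<in>{x, y}. (if v = x then a else b) *\<^sub>R v) = 0"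
    using assms(2,3) by simp
  note scalars_0 = assms(1)[unfolded independent_explicit_finite_subsets, rule_format,
      of "{x, y}" "\<lambda>v. if v = x then a else b"]
  from scalars_0[of x] scalars_0[of y] \<open>(\<Sum>v\<in>{x, y}. _) = 0\<close> assms(2) show ?thesis by auto
qed

lemma exists_independent_pair:
  fixes S :: "'a::euclidean_space set"
  assumes "2 \<le> dim S"
  shows "\<exists>x\<in>S. \<exists>y\<in>S. x \<noteq> y \<and> independent {x, y}"
proof -
  obtain B where B: "B \<subseteq> S" "independent B" "S \<subseteq> span B" "card B = dim S"
    by (rule basis_exists)
  then obtain T where T: "T \<subseteq> B" "card T = 2"
    using obtain_subset_with_card_n[of 2 B] assms by metis
  then obtain x y where "T = {x, y}" "x \<noteq> y"
    by (meson card_2_iff)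
  with T B show ?thesis
    using independent_mono[OF B(2)] by blast
qed

section \<open>Quadratic forms and polynomials of degree at most two\<close>

lemma grad_quadratic_form:
  fixes A :: "real^'d::finite^'d"
  assumes "\<And>t. P t = t \<bullet> (A *v t)"
  shows "grad P t = (A + transpose A) *v t"
proof -
  have "partial P j t = ((A + transpose A) *v t) $ j" for j
  proof -
    let ?e = "axis j 1 :: real^'d"
    have "(\<lambda>s. P (t + s *\<^sub>R ?e)) =
          (\<lambda>s. t \<bullet> (A *v t) + s * (t \<bullet> (A *v ?e) + ?e \<bullet> (A *v t)) + s^2 * (?e \<bullet> (A *v ?e)))"
      by (simp add: assms matrix_vector_right_distrib matrix_vector_mult_scaleR
          inner_add_left inner_add_right algebra_simps power2_eq_square)
    moreover have "((\<lambda>s. t \<bullet> (A *v t) + s * (t \<bullet> (A *v ?e) + ?e \<bullet> (A *v t)) + s^2 * (?e \<bullet> (A *v ?e)))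
        has_real_derivative (t \<bullet> (A *v ?e) + ?e \<bullet> (A *v t))) (at 0)"
      by (auto intro!: derivative_eq_intros)
    ultimately have "partial P j t = t \<bullet> (A *v ?e) + ?e \<bullet> (A *v t)"
      unfolding partial_def by (simp add: DERIV_imp_deriv)
    also have "\<dots> = ((A + transpose A) *v t) $ j"
      by (simp add: matrix_vector_mult_def inner_vec_def axis_def transpose_def
          matrix_vector_mult_add_rdistrib if_distrib if_distribR sum.distrib algebra_simps cong: if_cong)
    finally show ?thesis .
  qed
  then show ?thesis by (simp add: grad_def vec_eq_iff)
qed

lemma quadratic_form_grad_inner:
  fixes P :: "real^'d::finite \<Rightarrow> real"
  assumes "quadratic_form P"
  obtains B :: "real^'d^'d" where "\<And>t x. grad P t \<bullet> x = (B *v x) \<bullet> t"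
proof -
  obtain A :: "real^'d^'d" where A: "\<And>t. P t = t \<bullet> (A *v t)"
    using assms by (auto simp: quadratic_form_def)
  have sym: "transpose (A + transpose A) = A + transpose A"
    by (simp add: transpose_def vec_eq_iff add.commute)
  have "grad P t \<bullet> x = (x v* (A + transpose A)) \<bullet> t" for t x
    unfolding grad_quadratic_form[OF A] by (metis dot_lmul_matrix inner_commute)
  then show ?thesis
    using that by (metis sym vector_transpose_matrix)
qed

definition affine_fun :: "(real^'d::finite \<Rightarrow> real) \<Rightarrow> bool" where
  "affine_fun f \<longleftrightarrow> (\<exists>c b. f = (\<lambda>t. c + b \<bullet> t))"

definition deg2_polyfun :: "(real^'d::finite \<Rightarrow> real) \<Rightarrow> bool" where
  "deg2_polyfun f \<longleftrightarrow> (\<exists>c b Q. f = deg2_poly c b Q)"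

lemma deg2_polyfun_if_affine_fun:
  assumes "affine_fun f"
  shows "deg2_polyfun f"
proof -
  obtain c b where "f = (\<lambda>t. c + b \<bullet> t)"
    using assms by (auto simp: affine_fun_def)
  then have "f = deg2_poly c b 0"
    by (simp add: fun_eq_iff deg2_poly_def)
  then show ?thesis by (auto simp: deg2_polyfun_def)
qed

lemma deg2_polyfun_diff:
  assumes "deg2_polyfun f" and "deg2_polyfun g"
  shows "deg2_polyfun (\<lambda>t. f t - g t)"
proof -
  obtain c b Q c' b' Q' where "f = deg2_poly c b Q" "g = deg2_poly c' b' Q'"
    using assms by (auto simp: deg2_polyfun_def)
  then have "(\<lambda>t. f t - g t) = deg2_poly (c - c') (b - b') (Q - Q')"
    by (simp add: fun_eq_iff deg2_poly_def inner_diff_left inner_diff_right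
        matrix_vector_mult_diff_rdistrib)
  then show ?thesis by (auto simp: deg2_polyfun_def)
qed

lemma deg2_polyfun_mult_affine_fun:
  assumes "affine_fun f" and "affine_fun g"
  shows "deg2_polyfun (\<lambda>t. f t * g t)"
proof -
  obtain c1 b1 c2 b2 where fg: "f = (\<lambda>t. c1 + b1 \<bullet> t)" "g = (\<lambda>t. c2 + b2 \<bullet> t)"
    using assms by (auto simp: affine_fun_def)
  have "t \<bullet> ((\<chi> i j. b1 $ i * b2 $ j) *v t) = (b1 \<bullet> t) * (b2 \<bullet> t)" for t :: "real^'a"
    by (simp add: inner_vec_def matrix_vector_mult_def sum_distrib_left sum_distrib_right
        algebra_simps; subst sum.swap; simp add: algebra_simps)
  then have "(\<lambda>t. f t * g t) =
             deg2_poly (c1 * c2) (c1 *\<^sub>R b2 + c2 *\<^sub>R b1) (\<chi> i j. b1 $ i * b2 $ j)"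
    by (simp add: fg fun_eq_iff deg2_poly_def algebra_simps inner_add_left)
  then show ?thesis by (auto simp: deg2_polyfun_def)
qed

lemma deg2_poly_nonzero_if_nonvanishing:
  assumes "deg2_poly c b Q t \<noteq> 0"
  shows "deg2_poly_nonzero c b Q"
proof (rule ccontr)
  assume "\<not> deg2_poly_nonzero c b Q"
  then have cbQ: "c = 0" "b = 0" "Q + transpose Q = 0" by (auto simp: deg2_poly_nonzero_def)
  have "t \<bullet> (transpose Q *v t) = t \<bullet> (Q *v t)"
    by (metis dot_lmul_matrix inner_commute transpose_transpose vector_transpose_matrix)
  with cbQ(1,2) have "2 * deg2_poly c b Q t = t \<bullet> ((Q + transpose Q) *v t)"
    by (simp add: deg2_poly_def matrix_vector_mult_add_rdistrib inner_add_right)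
  with cbQ(3) assms show False by simp
qed

lemma exists_nonzero_deg2_poly_vanishing:
  assumes "deg2_polyfun f" and "f t0 \<noteq> 0"
  shows "\<exists>c b Q. deg2_poly_nonzero c b Q \<and> {t. f t = 0} \<subseteq> {t. deg2_poly c b Q t = 0}"
  using assms deg2_poly_nonzero_if_nonvanishing by (fastforce simp: deg2_polyfun_def)

definition nondegenerate_pair :: "(real^'d::finite \<Rightarrow> real) \<Rightarrow> (real^'d \<Rightarrow> real) \<Rightarrow> bool" where
  "nondegenerate_pair P1 P2 \<longleftrightarrow>
     (\<forall>w::nat \<Rightarrow> real^'d. inj_on w {..<CARD('d) - 2} \<longrightarrow> independent (w ` {..<CARD('d) - 2}) \<longrightarrow>
        (\<exists>t. det (row_matrix P1 P2 w t) \<noteq> 0))"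

lemma nondegenerate_pair_no_common_null_vector:
  fixes P1 P2 :: "real^'d::finite \<Rightarrow> real"
  assumes "nondegenerate_pair P1 P2"
  shows "\<exists>t. \<forall>z\<in>span {x, y}. grad P1 t \<bullet> z = 0 \<longrightarrow> grad P2 t \<bullet> z = 0 \<longrightarrow> z = 0"
proof -
  have "dim {x, y} \<le> card {x, y}"
    by (rule dim_le_card) (auto intro: span_base)
  moreover have "card {x, y} \<le> 2"
    by (simp add: card_insert_if)
  moreover have "dim {x, y} \<le> DIM(real^'d)"
    by (rule dim_subset_UNIV)
  ultimately have "CARD('d) - 2 + dim {x, y} \<le> DIM(real^'d)"
    by simp
  from exists_independent_family_orthogonal[OF this]
  obtain w :: "nat \<Rightarrow> real^'d" where w: "inj_on w {..<CARD('d) - 2}"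
      "independent (w ` {..<CARD('d) - 2})" "\<forall>i. \<forall>s\<in>{x, y}. w i \<bullet> s = 0"
    by blast
  then obtain t where t: "det (row_matrix P1 P2 w t) \<noteq> 0"
    using assms by (auto simp: nondegenerate_pair_def)
  have "z = 0" if z: "z \<in> span {x, y}" "grad P1 t \<bullet> z = 0" "grad P2 t \<bullet> z = 0" for z
  proof (rule ccontr)
    assume "z \<noteq> 0"
    have "w i \<bullet> z = 0" for i
      using orthogonal_to_span[OF z(1), of "w i"] w(3) by (simp add: orthogonal_def)
    with z have "row_matrix P1 P2 w t $ i \<bullet> z = 0" for i
      by (simp add: row_matrix_def)
    with \<open>z \<noteq> 0\<close> t show False
      using det_eq_0_if_orthogonal_to_rows by blast
  qed
  then show ?thesis by blast
qed

section \<open>The projections \<open>\<pi>\<^sub>t\<close>\<close>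

lemma linear_pi_t: "linear (pi_t P1 P2 t)"
  unfolding pi_t_def Vt_def by (rule linear_orth_proj_span)

lemma pi_t_eq_0_iff:
  "pi_t P1 P2 t (x, a, b) = 0 \<longleftrightarrow> x = - (a *\<^sub>R grad P1 t + b *\<^sub>R grad P2 t)"
proof -
  have "pi_t P1 P2 t (x, a, b) = 0 \<longleftrightarrow> (\<forall>j. x $ j + a * partial P1 j t + b * partial P2 j t = 0)"
    unfolding pi_t_def Vt_def orth_proj_span_eq_0_iff by (simp add: inner_prod_def inner_axis add.assoc)
  also have "\<dots> \<longleftrightarrow> x = - (a *\<^sub>R grad P1 t + b *\<^sub>R grad P2 t)"
    by (auto simp: vec_eq_iff grad_def add_eq_0_iff2 add.assoc)
  finally show ?thesis .
qed

definition grad_defect ::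
    "(real^'d::finite \<Rightarrow> real) \<Rightarrow> (real^'d \<Rightarrow> real) \<Rightarrow> real^'d \<Rightarrow> (real^'d) \<times> real \<times> real \<Rightarrow> real \<times> real"
  where "grad_defect P1 P2 t u = (fst (snd u) - grad P1 t \<bullet> fst u, snd (snd u) - grad P2 t \<bullet> fst u)"

definition defect_det ::
    "(real^'d::finite \<Rightarrow> real) \<Rightarrow> (real^'d \<Rightarrow> real) \<Rightarrow> (real^'d) \<times> real \<times> real \<Rightarrow> (real^'d) \<times> real \<times> real
     \<Rightarrow> real^'d \<Rightarrow> real"
  where "defect_det P1 P2 u u' t =
    fst (grad_defect P1 P2 t u) * snd (grad_defect P1 P2 t u') -
    snd (grad_defect P1 P2 t u) * fst (grad_defect P1 P2 t u')"

lemma inner_eq_grad_defect_if_pi_t_eq_0: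
  assumes "pi_t P1 P2 t k = 0"
  shows "k \<bullet> u = snd k \<bullet> grad_defect P1 P2 t u"
proof -
  obtain x a b where k: "k = (x, a, b)" by (cases k) auto
  with assms have "x = - (a *\<^sub>R grad P1 t + b *\<^sub>R grad P2 t)" by (simp add: pi_t_eq_0_iff)
  with k show ?thesis
    by (simp add: grad_defect_def inner_prod_def inner_add_left algebra_simps)
qed

lemma inj_on_snd_pi_t_kernel: "inj_on snd {k. pi_t P1 P2 t k = 0}"
  by (rule inj_onI) (auto simp: pi_t_eq_0_iff)

lemma subspace_pi_t_kernel:
  assumes "subspace V"
  shows "subspace {k \<in> V. pi_t P1 P2 t k = 0}"
  using assms linear_pi_t[of P1 P2 t] by (auto simp: subspace_def linear_add linear_cmul linear_0)

lemma defect_det_eq_0_if_dim_pi_t_image_less: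
  assumes V: "subspace V" and drop: "dim (pi_t P1 P2 t ` V) < dim V"
    and u: "\<forall>v\<in>V. orthogonal v u" and u': "\<forall>v\<in>V. orthogonal v u'"
  shows "defect_det P1 P2 u u' t = 0"
proof -
  let ?K = "{k \<in> V. pi_t P1 P2 t k = 0}"
  have "dim ?K \<noteq> 0" using dim_le_dim_image_add_dim_kernel[OF linear_pi_t[of P1 P2 t] V] drop by linarith
  then obtain k where k: "k \<in> V" "pi_t P1 P2 t k = 0" "k \<noteq> 0"
    using dim_eq_0[of ?K] by auto
  obtain a b where ab: "snd k = (a, b)" by (cases "snd k") auto
  have ab_ne: "(a, b) \<noteq> (0, 0)"
    using k ab inj_on_snd_pi_t_kernel[of P1 P2 t, THEN inj_onD, of k 0] linear_0[OF linear_pi_t]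
    by (auto simp: zero_prod_def)
  have "snd k \<bullet> grad_defect P1 P2 t u = 0" "snd k \<bullet> grad_defect P1 P2 t u' = 0"
    using k u u' by (simp_all add: orthogonal_def flip: inner_eq_grad_defect_if_pi_t_eq_0)
  then have "a * fst (grad_defect P1 P2 t u) + b * snd (grad_defect P1 P2 t u) = 0"
    "a * fst (grad_defect P1 P2 t u') + b * snd (grad_defect P1 P2 t u') = 0"
    using ab by (simp_all add: inner_prod_def)
  with ab_ne show ?thesis
    unfolding defect_det_def by (intro det2_eq_0_iff[THEN iffD2] exI conjI)
qed

lemma grad_defect_eq_0_if_dim_pi_t_image_less_diff_1:
  assumes V: "subspace V" and drop: "dim (pi_t P1 P2 t ` V) < dim V - 1"
    and u: "\<forall>v\<in>V. orthogonal v u"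
  shows "grad_defect P1 P2 t u = 0"
proof -
  let ?K = "{k \<in> V. pi_t P1 P2 t k = 0}"
  have inj: "inj_on snd ?K"
    using inj_on_snd_pi_t_kernel by (rule inj_on_subset) auto
  have "2 \<le> dim ?K"
    using dim_le_dim_image_add_dim_kernel[OF linear_pi_t[of P1 P2 t] V] drop by linarith
  then have "DIM(real \<times> real) \<le> dim ?K"
    by simp
  then have "snd ` ?K = UNIV"
    by (rule inj_on_linear_image_eq_UNIV[OF linear_snd subspace_pi_t_kernel[OF V] inj])
  then have "grad_defect P1 P2 t u \<in> snd ` ?K"
    by simp
  then obtain k where k: "k \<in> V" "pi_t P1 P2 t k = 0" "snd k = grad_defect P1 P2 t u"
    by force
  then have "grad_defect P1 P2 t u \<bullet> grad_defect P1 P2 t u = k \<bullet> u"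
    by (simp add: inner_eq_grad_defect_if_pi_t_eq_0)
  also have "\<dots> = 0"
    using u k(1) by (simp add: orthogonal_def)
  finally show ?thesis by simp
qed

lemma affine_fun_grad_defect:
  assumes "quadratic_form P1" and "quadratic_form P2"
  shows "affine_fun (\<lambda>t. fst (grad_defect P1 P2 t u))" "affine_fun (\<lambda>t. snd (grad_defect P1 P2 t u))"
proof -
  obtain B1 where B1: "\<And>t x. grad P1 t \<bullet> x = (B1 *v x) \<bullet> t"
    using quadratic_form_grad_inner[OF assms(1)] by blast
  obtain B2 where B2: "\<And>t x. grad P2 t \<bullet> x = (B2 *v x) \<bullet> t"
    using quadratic_form_grad_inner[OF assms(2)] by blast
  have "(\<lambda>t. fst (grad_defect P1 P2 t u)) = (\<lambda>t. fst (snd u) + (- (B1 *v fst u)) \<bullet> t)"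
       "(\<lambda>t. snd (grad_defect P1 P2 t u)) = (\<lambda>t. snd (snd u) + (- (B2 *v fst u)) \<bullet> t)"
    by (simp_all add: fun_eq_iff grad_defect_def B1 B2)
  then show "affine_fun (\<lambda>t. fst (grad_defect P1 P2 t u))" "affine_fun (\<lambda>t. snd (grad_defect P1 P2 t u))"
    unfolding affine_fun_def by blast+
qed

lemma deg2_polyfun_defect_det:
  assumes "quadratic_form P1" and "quadratic_form P2"
  shows "deg2_polyfun (defect_det P1 P2 u u')"
  unfolding defect_det_def
  by (intro deg2_polyfun_diff deg2_polyfun_mult_affine_fun affine_fun_grad_defect[OF assms])

lemma defect_det_nonvanishing_if_independent:
  assumes nd: "nondegenerate_pair P1 P2" and qf: "quadratic_form P1" "quadratic_form P2"
    and ind: "independent {fst u, fst u'}" and ne: "fst u \<noteq> fst u'"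
  shows "\<exists>t. defect_det P1 P2 u u' t \<noteq> 0"
proof (rule ccontr)
  assume "\<nexists>t. defect_det P1 P2 u u' t \<noteq> 0"
  then have D0: "\<And>t. defect_det P1 P2 u u' t = 0" by blast
  obtain B1 where B1: "\<And>t x. grad P1 t \<bullet> x = (B1 *v x) \<bullet> t"
    using quadratic_form_grad_inner[OF qf(1)] by blast
  obtain B2 where B2: "\<And>t x. grad P2 t \<bullet> x = (B2 *v x) \<bullet> t"
    using quadratic_form_grad_inner[OF qf(2)] by blast
  let ?x = "fst u" and ?y = "fst u'"
  \<comment> \<open>the even part \<open>D(t) + D(-t) - 2 D(0)\<close> of \<open>D = defect_det P1 P2 u u'\<close> is twice its quadratic part\<close>
  have quad0: "(grad P1 t \<bullet> ?x) * (grad P2 t \<bullet> ?y) - (grad P1 t \<bullet> ?y) * (grad P2 t \<bullet> ?x) = 0" for t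
  proof -
    have "defect_det P1 P2 u u' t + defect_det P1 P2 u u' (- t) - 2 * defect_det P1 P2 u u' 0 =
          2 * ((grad P1 t \<bullet> ?x) * (grad P2 t \<bullet> ?y) - (grad P1 t \<bullet> ?y) * (grad P2 t \<bullet> ?x))"
      by (simp add: defect_det_def grad_defect_def B1 B2 algebra_simps)
    then show ?thesis by (simp add: D0)
  qed
  obtain t where t: "\<forall>z\<in>span {?x, ?y}. grad P1 t \<bullet> z = 0 \<longrightarrow> grad P2 t \<bullet> z = 0 \<longrightarrow> z = 0"
    using nondegenerate_pair_no_common_null_vector[OF nd] by blast
  obtain a b where ab: "(a, b) \<noteq> (0, 0)"
      "a * (grad P1 t \<bullet> ?x) + b * (grad P1 t \<bullet> ?y) = 0" "a * (grad P2 t \<bullet> ?x) + b * (grad P2 t \<bullet> ?y) = 0"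
    using quad0[of t] unfolding det2_eq_0_iff by blast
  have "a *\<^sub>R ?x + b *\<^sub>R ?y \<in> span {?x, ?y}"
    by (simp add: span_add span_scale span_base)
  moreover have "grad P1 t \<bullet> (a *\<^sub>R ?x + b *\<^sub>R ?y) = 0" "grad P2 t \<bullet> (a *\<^sub>R ?x + b *\<^sub>R ?y) = 0"
    using ab(2,3) by (simp_all add: inner_add_right)
  ultimately have "a *\<^sub>R ?x + b *\<^sub>R ?y = 0" using t by blast
  with ab(1) show False
    using independent_pair_scaleR_eq_0[OF ind ne] by auto
qed

lemma exists_defect_det_nonvanishing:
  assumes nd: "nondegenerate_pair P1 P2" and qf: "quadratic_form P1" "quadratic_form P2"
    and U: "subspace U" and dim_U: "3 \<le> dim U"
  shows "\<exists>u\<in>U. \<exists>u'\<in>U. \<exists>t. defect_det P1 P2 u u' t \<noteq> 0"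
proof -
  let ?K = "{u \<in> U. fst u = 0}"
  have "dim U \<le> dim (fst ` U) + dim ?K"
    by (rule dim_le_dim_image_add_dim_kernel[OF linear_fst U])
  with dim_U consider "2 \<le> dim ?K" | "2 \<le> dim (fst ` U)" by linarith
  then show ?thesis
  proof cases
    case 1
    have "subspace ?K" using U by (auto simp: subspace_def)
    moreover have "inj_on snd ?K" by (auto intro!: inj_onI prod_eqI)
    ultimately have "snd ` ?K = UNIV"
      using 1 by (intro inj_on_linear_image_eq_UNIV[OF linear_snd]) simp_all
    then have "(1, 0) \<in> snd ` ?K" "(0, 1) \<in> snd ` ?K" by simp_all
    then obtain e1 e2 where "e1 \<in> ?K" "snd e1 = (1, 0)" "e2 \<in> ?K" "snd e2 = (0, 1)"
      by (auto simp del: snd_conv)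
    then show ?thesis
      by (intro bexI[of _ e1] bexI[of _ e2] exI[of _ 0]) (auto simp: defect_det_def grad_defect_def)
  next
    case 2
    then obtain x y where "x \<in> fst ` U" "y \<in> fst ` U" "x \<noteq> y" "independent {x, y}"
      using exists_independent_pair by blast
    then obtain u u' where "u \<in> U" "u' \<in> U" "independent {fst u, fst u'}" "fst u \<noteq> fst u'"
      by auto
    then show ?thesis
      using defect_det_nonvanishing_if_independent[OF nd qf] by blast
  qed
qed

lemma grad_defect_nonvanishing:
  assumes nd: "nondegenerate_pair P1 P2" and qf: "quadratic_form P1" "quadratic_form P2"
    and "u \<noteq> 0"
  shows "\<exists>t. grad_defect P1 P2 t u \<noteq> 0"
proof (rule ccontr)
  assume "\<nexists>t. grad_defect P1 P2 t u \<noteq> 0"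
  then have G0: "\<And>t. grad_defect P1 P2 t u = 0" by blast
  obtain B1 where B1: "\<And>t x. grad P1 t \<bullet> x = (B1 *v x) \<bullet> t"
    using quadratic_form_grad_inner[OF qf(1)] by blast
  obtain B2 where B2: "\<And>t x. grad P2 t \<bullet> x = (B2 *v x) \<bullet> t"
    using quadratic_form_grad_inner[OF qf(2)] by blast
  have "snd u = 0"
    using G0[of 0] by (simp add: grad_defect_def B1 B2 prod_eq_iff)
  with G0 have "grad P1 t \<bullet> fst u = 0 \<and> grad P2 t \<bullet> fst u = 0" for t
    by (simp add: grad_defect_def prod_eq_iff)
  moreover have "fst u \<noteq> 0"
    using \<open>u \<noteq> 0\<close> \<open>snd u = 0\<close> by (simp add: prod_eq_iff)
  ultimately show False
    using nondegenerate_pair_no_common_null_vector[OF nd, of "fst u" "fst u"] by (auto simp: span_base)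
qed

lemma exists_nonzero_deg2_poly_vanishing_on_grad_defect_zeros:
  assumes nd: "nondegenerate_pair P1 P2" and qf: "quadratic_form P1" "quadratic_form P2"
    and "u \<noteq> 0"
  shows "\<exists>c b Q. deg2_poly_nonzero c b Q \<and>
                 {t. grad_defect P1 P2 t u = 0} \<subseteq> {t. deg2_poly c b Q t = 0}"
proof -
  have deg2: "deg2_polyfun (\<lambda>t. fst (grad_defect P1 P2 t u))" "deg2_polyfun (\<lambda>t. snd (grad_defect P1 P2 t u))"
    using deg2_polyfun_if_affine_fun affine_fun_grad_defect[OF qf] by blast+
  obtain t0 where "grad_defect P1 P2 t0 u \<noteq> 0"
    using grad_defect_nonvanishing[OF assms] by blast
  then consider "fst (grad_defect P1 P2 t0 u) \<noteq> 0" | "snd (grad_defect P1 P2 t0 u) \<noteq> 0"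
    by (auto simp: prod_eq_iff)
  then show ?thesis
  proof cases
    case 1
    moreover have "{t. grad_defect P1 P2 t u = 0} \<subseteq> {t. fst (grad_defect P1 P2 t u) = 0}"
      by auto
    ultimately show ?thesis
      using exists_nonzero_deg2_poly_vanishing[OF deg2(1)] by (meson subset_trans)
  next
    case 2
    moreover have "{t. grad_defect P1 P2 t u = 0} \<subseteq> {t. snd (grad_defect P1 P2 t u) = 0}"
      by auto
    ultimately show ?thesis
      using exists_nonzero_deg2_poly_vanishing[OF deg2(2)] by (meson subset_trans)
  qed
qed

lemma dim_orthogonal_complement:
  fixes V :: "'a::euclidean_space set"
  assumes "subspace V"
  shows "dim {u. \<forall>v\<in>V. orthogonal v u} + dim V = DIM('a)"
  using dim_subspace_orthogonal_to_vectors[OF assms subspace_UNIV] by (simp add: dim_UNIV)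

lemma deg2_poly_vanishing_where_dim_pi_t_image_less:
  assumes nd: "nondegenerate_pair P1 P2" and qf: "quadratic_form P1" "quadratic_form P2"
    and V: "subspace V" and dim_V: "dim V < CARD('d)"
  shows "\<exists>c b Q. deg2_poly_nonzero c b Q \<and>
           {t. dim (pi_t P1 P2 t ` V) < dim V} \<subseteq> {t::real^'d::finite. deg2_poly c b Q t = 0}"
proof -
  let ?U = "{u. \<forall>v\<in>V. orthogonal v u}"
  have "3 \<le> dim ?U"
    using dim_orthogonal_complement[OF V] dim_V by simp
  then obtain u u' t0 where u: "u \<in> ?U" "u' \<in> ?U" and "defect_det P1 P2 u u' t0 \<noteq> 0"
    using exists_defect_det_nonvanishing[OF nd qf subspace_orthogonal_to_vectors] by blast
  then obtain c b Q where "deg2_poly_nonzero c b Q"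
      and "{t. defect_det P1 P2 u u' t = 0} \<subseteq> {t. deg2_poly c b Q t = 0}"
    using exists_nonzero_deg2_poly_vanishing[OF deg2_polyfun_defect_det[OF qf]] by blast
  moreover have "{t. dim (pi_t P1 P2 t ` V) < dim V} \<subseteq> {t. defect_det P1 P2 u u' t = 0}"
    using defect_det_eq_0_if_dim_pi_t_image_less[OF V] u by blast
  ultimately show ?thesis by blast
qed

lemma deg2_poly_vanishing_where_dim_pi_t_image_less_diff_1:
  assumes nd: "nondegenerate_pair P1 P2" and qf: "quadratic_form P1" "quadratic_form P2"
    and V: "subspace V" and dim_V: "dim V < CARD('d) + 2"
  shows "\<exists>c b Q. deg2_poly_nonzero c b Q \<and>
           {t. dim (pi_t P1 P2 t ` V) < dim V - 1} \<subseteq> {t::real^'d::finite. deg2_poly c b Q t = 0}"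
proof -
  let ?U = "{u. \<forall>v\<in>V. orthogonal v u}"
  have "dim ?U + dim V = CARD('d) + 2"
    using dim_orthogonal_complement[OF V] by simp
  with dim_V have "dim ?U \<noteq> 0"
    by linarith
  then obtain u where u: "u \<in> ?U" "u \<noteq> 0"
    using dim_eq_0[of ?U] by auto
  then obtain c b Q where "deg2_poly_nonzero c b Q"
      and "{t. grad_defect P1 P2 t u = 0} \<subseteq> {t. deg2_poly c b Q t = 0}"
    using exists_nonzero_deg2_poly_vanishing_on_grad_defect_zeros[OF nd qf] by blast
  moreover have "{t. dim (pi_t P1 P2 t ` V) < dim V - 1} \<subseteq> {t. grad_defect P1 P2 t u = 0}"
    using grad_defect_eq_0_if_dim_pi_t_image_less_diff_1[OF V] u by blast
  ultimately show ?thesis by blast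
qed

theorem mainTheorem17:
  fixes P1 P2 :: "real^'d::finite \<Rightarrow> real"
    and V :: "((real^'d) \<times> real \<times> real) set"
  assumes d3: "CARD('d) \<ge> 3"
    and qf1: "quadratic_form P1" and qf2: "quadratic_form P2"
    and nondeg: "\<And>w::nat \<Rightarrow> real^'d.
         inj_on w {..<CARD('d) - 2} \<Longrightarrow> independent (w ` {..<CARD('d) - 2}) \<Longrightarrow>
         \<exists>t. det (row_matrix P1 P2 w t) \<noteq> 0"
    and subV: "subspace V" and ntV: "V \<noteq> {0}" and propV: "V \<noteq> UNIV"
  shows "(1 \<le> dim V \<and> dim V \<le> CARD('d) - 1 \<longrightarrow>
            (\<exists>c b Q. deg2_poly_nonzero c b Q \<and>
               {t. dim (pi_t P1 P2 t ` V) < dim V} \<subseteq> {t. deg2_poly c b Q t = 0}))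
       \<and> (CARD('d) \<le> dim V \<and> dim V \<le> CARD('d) + 1 \<longrightarrow>
            (\<exists>c b Q. deg2_poly_nonzero c b Q \<and>
               {t. dim (pi_t P1 P2 t ` V) < dim V - 1} \<subseteq> {t. deg2_poly c b Q t = 0}))"
proof -
  have "nondegenerate_pair P1 P2"
    using nondeg unfolding nondegenerate_pair_def by blast
  \<comment> \<open>\<open>V \<noteq> {0}\<close> and \<open>V \<noteq> UNIV\<close> are implied by the dimension ranges of (1) and (2)\<close>
  then show ?thesis
    using deg2_poly_vanishing_where_dim_pi_t_image_less[OF _ qf1 qf2 subV]
      deg2_poly_vanishing_where_dim_pi_t_image_less_diff_1[OF _ qf1 qf2 subV] d3
    by auto
qed

end
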